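(* For any state $\rho$ of $A$ and any state $\eta$ of $R$, $$H_{\mathcal{G}(\eta)}(\rho)=H_\eta(\mathcal{G}(\rho))=H_{\mathcal{G}(\eta)}(\mathcal{G}(\rho))=-\log\|\mathcal{G}(\eta)\|_\infty .$$
   Context: $G$ is a compact group with normalized Haar measure $dg$; finite-dimensional systems $A,R$ carry continuous unitary representations $U_A,U_R$. On a single system $\mathcal{G}(M)=\int dg\,U(g)MU(g)^\dagger$; on $RA$, $\mathcal{G}(M)=\int dg\,(U_R(g)\otimes U_A(g))M(U_R(g)\otimes U_A(g))^\dagger$. $H_{\min}(R|A)_\Omega=-\log_2\inf_{X\ge0}\{\mathrm{tr}[X]:\mathbb{1}_R\otimes X\ge\Omega_{RA}\}$, and $H_\eta(\tau):=H_{\min}(R|A)_{\mathcal{G}(\eta\otimes\tau)}$. $\|\cdot\|_\infty$ is the operator norm; logarithms base 2. *)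

theory Defs
  imports "HOL-Analysis.Analysis"
begin

text \<open>Finite-dimensional systems: complex matrices indexed by finite types.
  The compact group G is a type 'g of class topological_group_add
  (group law written additively, not assumed commutative).\<close>

definition adj :: "complex^'n^'m \<Rightarrow> complex^'m^'n" where
  "adj M = (\<chi> i j. cnj (M $ j $ i))"

definition mtrace :: "complex^'n^'n \<Rightarrow> complex" where
  "mtrace M = (\<Sum>i\<in>UNIV. M $ i $ i)"

definition psd :: "complex^'n^'n \<Rightarrow> bool" where
  "psd M \<longleftrightarrow> (\<forall>v::complex^'n. (\<Sum>i\<in>UNIV. \<Sum>j\<in>UNIV. cnj (v $ i) * M $ i $ j * v $ j) \<in> \<real>
       \<and> 0 \<le> Re (\<Sum>i\<in>UNIV. \<Sum>j\<in>UNIV. cnj (v $ i) * M $ i $ j * v $ j))"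

definition density :: "complex^'n^'n \<Rightarrow> bool" where
  "density M \<longleftrightarrow> psd M \<and> mtrace M = 1"

definition unitary :: "complex^'n^'n \<Rightarrow> bool" where
  "unitary M \<longleftrightarrow> adj M ** M = mat 1 \<and> M ** adj M = mat 1"

definition kron :: "complex^'r^'r \<Rightarrow> complex^'a^'a \<Rightarrow> complex^('r \<times> 'a)^('r \<times> 'a)" where
  "kron M N = (\<chi> p q. M $ fst p $ fst q * N $ snd p $ snd q)"

definition haar_prob :: "'g::topological_group_add measure \<Rightarrow> bool" where
  "haar_prob \<mu> \<longleftrightarrow> compact (UNIV :: 'g set) \<and> sets \<mu> = sets borel \<and> emeasure \<mu> (space \<mu>) = 1
     \<and> (\<forall>h A. A \<in> sets borel \<longrightarrow> emeasure \<mu> ((\<lambda>g. h + g) ` A) = emeasure \<mu> A)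
     \<and> (\<forall>h A. A \<in> sets borel \<longrightarrow> emeasure \<mu> ((\<lambda>g. g + h) ` A) = emeasure \<mu> A)"

definition unitary_rep :: "('g::topological_group_add \<Rightarrow> complex^'n^'n) \<Rightarrow> bool" where
  "unitary_rep U \<longleftrightarrow> continuous_on UNIV U \<and> (\<forall>g. unitary (U g))
     \<and> U 0 = mat 1 \<and> (\<forall>g h. U (g + h) = U g ** U h)"

definition twirl :: "'g::topological_group_add measure \<Rightarrow> ('g \<Rightarrow> complex^'n^'n)
     \<Rightarrow> complex^'n^'n \<Rightarrow> complex^'n^'n" where
  "twirl \<mu> U M = integral\<^sup>L \<mu> (\<lambda>g. U g ** M ** adj (U g))"

definition rep_RA :: "('g \<Rightarrow> complex^'r^'r) \<Rightarrow> ('g \<Rightarrow> complex^'a^'a)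
     \<Rightarrow> 'g \<Rightarrow> complex^('r \<times> 'a)^('r \<times> 'a)" where
  "rep_RA UR UA g = kron (UR g) (UA g)"

definition Hmin :: "complex^('r::finite \<times> 'a::finite)^('r \<times> 'a) \<Rightarrow> real" where
  "Hmin \<Omega> = - log 2 (Inf {Re (mtrace X) | X :: complex^'a^'a.
                  psd X \<and> psd (kron (mat 1 :: complex^'r^'r) X - \<Omega>)})"

definition H_eta :: "'g::topological_group_add measure \<Rightarrow> ('g \<Rightarrow> complex^'r^'r) \<Rightarrow> ('g \<Rightarrow> complex^'a^'a)
     \<Rightarrow> complex^'r^'r \<Rightarrow> complex^'a^'a \<Rightarrow> real" where
  "H_eta \<mu> UR UA \<eta> \<tau> = Hmin (twirl \<mu> (rep_RA UR UA) (kron \<eta> \<tau>))"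

end

theory Submission
  imports Defs
begin

(* Left invariance of the Haar measure makes every twirled operator invariant under conjugation
   by each U(h), so an invariant tensor factor can be pulled out of the twirl on RA: all three
   entropies are H_min of the product G(\<eta>) \<otimes> G(\<rho>). For a product \<omega> \<otimes> \<tau> with tr \<tau> = 1 the
   optimal X is \<parallel>\<omega>\<parallel> \<tau>. It is feasible because (\<parallel>\<omega>\<parallel> 1 - \<omega>) \<otimes> \<tau> is positive semidefinite
   (decompose \<tau> into rank-one terms). It is optimal because testing 1 \<otimes> X \<ge> \<omega> \<otimes> \<tau> on the
   vectors v \<otimes> e_a and summing over a gives <v, \<omega> v> \<le> tr X |v|^2, and for positive
   semidefinite \<omega> this quadratic-form bound already bounds the operator norm. *)

definition cinner :: "complex^'n \<Rightarrow> complex^'n \<Rightarrow> complex" where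
  "cinner u w = (\<Sum>i\<in>UNIV. cnj (u$i) * w$i)"

definition sesq :: "complex^'n^'n \<Rightarrow> complex^'n \<Rightarrow> complex^'n \<Rightarrow> complex" where
  "sesq M u v = cinner u (M *v v)"

lemma psd_iff_sesq: "psd M \<longleftrightarrow> (\<forall>v. sesq M v v \<in> \<real> \<and> 0 \<le> Re (sesq M v v))"
proof -
  have "(\<Sum>i\<in>UNIV. \<Sum>j\<in>UNIV. cnj (v $ i) * M $ i $ j * v $ j) = sesq M v v" for v
    by (simp add: sesq_def cinner_def matrix_vector_mult_def sum_distrib_left mult.assoc)
  then show ?thesis
    unfolding psd_def by simp
qed

lemma cinner_add_scaleR_left: "cinner (a *s u + b *s v) w = cnj a * cinner u w + cnj b * cinner v w"
  by (simp add: cinner_def sum.distrib sum_distrib_left algebra_simps)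

lemma cinner_add_scaleR_right: "cinner u (a *s w + b *s w') = a * cinner u w + b * cinner u w'"
  by (simp add: cinner_def sum.distrib sum_distrib_left algebra_simps)

lemma cinner_self: "cinner v v = of_real ((norm v)\<^sup>2)"
proof -
  have "of_real ((norm v)\<^sup>2) = (\<Sum>i\<in>UNIV. of_real ((cmod (v$i))\<^sup>2) :: complex)"
    by (simp add: norm_vec_def L2_set_def sum_nonneg)
  also have "\<dots> = cinner v v"
    unfolding cinner_def by (intro sum.cong refl) (simp only: complex_norm_square mult.commute)
  finally show ?thesis ..
qed

lemma cinner_adj: "cinner u (A *v w) = cinner (adj A *v u) w"
proof -
  have "cinner u (A *v w) = (\<Sum>i\<in>UNIV. \<Sum>j\<in>UNIV. cnj (u$i) * A$i$j * w$j)"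
    by (simp add: cinner_def matrix_vector_mult_def sum_distrib_left mult.assoc)
  also have "\<dots> = (\<Sum>j\<in>UNIV. \<Sum>i\<in>UNIV. cnj (u$i) * A$i$j * w$j)"
    by (rule sum.swap)
  also have "\<dots> = cinner (adj A *v u) w"
    by (simp add: cinner_def adj_def matrix_vector_mult_def sum_distrib_left sum_distrib_right mult_ac)
  finally show ?thesis .
qed

lemma sesq_add_scaleR:
  "sesq M (a *s u + b *s v) (a *s u + b *s v) =
     cnj a * a * sesq M u u + cnj a * b * sesq M u v + cnj b * a * sesq M v u + cnj b * b * sesq M v v"
  unfolding sesq_def matrix_vector_right_distrib vector_scalar_commute
    cinner_add_scaleR_left cinner_add_scaleR_right
  by (simp add: algebra_simps)

lemma sesq_add: "sesq (A + B) u v = sesq A u v + sesq B u v"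
  by (simp add: sesq_def cinner_def matrix_vector_mult_def sum.distrib ring_distribs)

lemma sesq_diff: "sesq (A - B) u v = sesq A u v - sesq B u v"
  by (simp add: sesq_def cinner_def matrix_vector_mult_def sum_subtractf ring_distribs)

lemma sesq_scaleR: "sesq (r *\<^sub>R A) u v = r *\<^sub>R sesq A u v"
  by (simp add: sesq_def cinner_def matrix_vector_mult_def sum_distrib_left)
    (simp add: scaleR_conv_of_real sum_distrib_left mult_ac)

lemma sesq_mat1: "sesq (mat 1) u v = cinner u v"
  by (simp add: sesq_def)

lemma sesq_axis_left: "sesq M (axis i 1) v = (M *v v)$i"
proof -
  have "sesq M (axis i 1) v = (\<Sum>k\<in>UNIV. if k = i then (M *v v)$k else 0)"
    unfolding sesq_def cinner_def by (intro sum.cong) (auto simp: axis_def)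
  then show ?thesis by simp
qed

lemma sesq_axis: "sesq M (axis i 1) (axis j 1) = M$i$j"
proof -
  have "(M *v axis j 1)$i = (\<Sum>k\<in>UNIV. if k = j then M$i$k else 0)"
    unfolding matrix_vector_mult_def vec_lambda_beta by (intro sum.cong) (auto simp: axis_def)
  then show ?thesis by (simp add: sesq_axis_left)
qed

lemma psd_sesq_real: "psd M \<Longrightarrow> sesq M v v = of_real (Re (sesq M v v))"
  unfolding psd_iff_sesq by (metis Reals_cases Re_complex_of_real)

lemma psd_sesq_nonneg: "psd M \<Longrightarrow> 0 \<le> Re (sesq M v v)"
  unfolding psd_iff_sesq by blast

lemma psd_sesq_commute:
  assumes "psd M" shows "sesq M v u = cnj (sesq M u v)"
proof -
  have real: "Im (sesq M x x) = 0" for x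
    using assms unfolding psd_iff_sesq by (simp add: complex_is_Real_iff)
  show ?thesis
    using real[of "1 *s u + 1 *s v"] real[of "1 *s u + \<i> *s v"] real[of u] real[of v]
    unfolding sesq_add_scaleR by (simp add: complex_eq_iff)
qed

lemma psd_entry_cnj: "psd S \<Longrightarrow> S$j$i = cnj (S$i$j)"
  using psd_sesq_commute[of S "axis i 1" "axis j 1"] by (simp add: sesq_axis)

lemma psd_Cauchy_Schwarz:
  assumes "psd M" shows "(cmod (sesq M u v))\<^sup>2 \<le> Re (sesq M u u) * Re (sesq M v v)"
proof -
  define a c m where "a = Re (sesq M u u)" and "c = Re (sesq M v v)" and "m = (cmod (sesq M u v))\<^sup>2"
  have a: "0 \<le> a" and c: "0 \<le> c" and m: "0 \<le> m"
    using psd_sesq_nonneg[OF assms] by (auto simp: a_def c_def m_def)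
  have quadratic: "0 \<le> a - 2 * t * m + t\<^sup>2 * m * c" for t :: real
  proof -
    define b where "b = sesq M u v"
    have mb: "m = Re b * Re b + Im b * Im b"
      unfolding m_def b_def cmod_power2 by (simp add: power2_eq_square)
    have "0 \<le> Re (sesq M (1 *s u + (- t * cnj b) *s v) (1 *s u + (- t * cnj b) *s v))"
      by (rule psd_sesq_nonneg[OF assms])
    also have "\<dots> = a - 2 * t * m + t\<^sup>2 * m * c"
      unfolding sesq_add_scaleR psd_sesq_commute[OF assms, of v u]
      by (subst (1 2) psd_sesq_real[OF assms])
        (simp add: a_def c_def mb b_def[symmetric] power2_eq_square algebra_simps)
    finally show ?thesis .
  qed
  show ?thesis
  proof (cases "c = 0")
    case True
    have "m = 0"
    proof (rule ccontr)
      assume "m \<noteq> 0"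
      then show False
        using quadratic[of "(a + 1) / (2 * m)"] True m by (simp add: field_simps)
    qed
    then show ?thesis using a c by (simp add: m_def a_def c_def)
  next
    case False
    then have "0 \<le> a - m / c"
      using quadratic[of "1 / c"] c by (simp add: field_simps power2_eq_square)
    then show ?thesis using False c by (simp add: a_def c_def m_def field_simps)
  qed
qed

lemma psd_add: "psd A \<Longrightarrow> psd B \<Longrightarrow> psd (A + B)"
  unfolding psd_iff_sesq sesq_add by (simp add: Reals_add)

lemma psd_scaleR: "0 \<le> r \<Longrightarrow> psd A \<Longrightarrow> psd (r *\<^sub>R A)"
  unfolding psd_iff_sesq sesq_scaleR by (simp add: scaleR_conv_of_real Reals_mult)

lemma psd_zero: "psd 0"
  unfolding psd_iff_sesq by (simp add: sesq_def cinner_def)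

lemma psd_congruence:
  fixes B :: "complex^'n^'m"
  assumes "psd M" shows "psd (B ** M ** adj B)"
proof -
  have "sesq (B ** M ** adj B) v v = sesq M (adj B *v v) (adj B *v v)" for v
    unfolding sesq_def matrix_vector_mul_assoc[symmetric] by (rule cinner_adj)
  then show ?thesis
    using assms unfolding psd_iff_sesq by simp
qed

definition outer :: "complex^'n \<Rightarrow> complex^'n^'n" where
  "outer x = (\<chi> i j. x$i * cnj (x$j))"

lemma outer_scale_real: "outer (of_real r *s x) = r\<^sup>2 *\<^sub>R outer x"
  by (simp add: outer_def vec_eq_iff) (simp add: scaleR_conv_of_real power2_eq_square mult_ac)

lemma sesq_outer: "sesq (outer x) v v = cnj (cinner x v) * cinner x v"
  by (simp add: sesq_def cinner_def outer_def matrix_vector_mult_def sum_distrib_left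
      sum_distrib_right mult_ac)

lemma psd_row_zero:
  assumes "psd S" and "S$k$k = 0" shows "S$k$j = 0"
  using psd_Cauchy_Schwarz[OF assms(1), of "axis k 1" "axis j 1"] assms(2)
  by (simp add: sesq_axis)

lemma psd_schur_complement:
  assumes S: "psd S" and d: "0 < Re (S$k$k)"
  defines "S' \<equiv> S - (1 / Re (S$k$k)) *\<^sub>R outer (column k S)"
  shows "psd S'" and "S'$k$j = 0"
proof -
  define d where "d = Re (S$k$k)"
  have Skk: "S$k$k = of_real d"
    using psd_sesq_real[OF S, of "axis k 1"] by (simp add: sesq_axis d_def)
  show "psd S'"
    unfolding psd_iff_sesq
  proof
    fix v
    define m where "m = (S *v v)$k"
    define t where "t = - m / of_real d"
    have "cinner (column k S) v = m"
      unfolding cinner_def m_def column_def matrix_vector_mult_def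
      by (simp add: psd_entry_cnj[OF S, of k] mult.commute)
    then have "sesq S' v v = sesq S v v - of_real (1/d) * (cnj m * m)"
      unfolding S'_def d_def[symmetric] sesq_diff sesq_scaleR sesq_outer
      by (simp add: scaleR_conv_of_real)
    also have "\<dots> = sesq S v v + t * cnj m + cnj t * m + cnj t * t * of_real d"
      using d by (simp add: t_def d_def[symmetric] field_simps)
    also have "\<dots> = sesq S (1 *s v + t *s axis k 1) (1 *s v + t *s axis k 1)"
      unfolding sesq_add_scaleR psd_sesq_commute[OF S, of v "axis k 1"] sesq_axis
      by (simp add: sesq_axis_left Skk m_def)
    finally show "sesq S' v v \<in> \<real> \<and> 0 \<le> Re (sesq S' v v)"
      using S unfolding psd_iff_sesq by metis
  qed
  show "S'$k$j = 0"
    using d by (simp add: S'_def outer_def column_def)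
      (simp add: psd_entry_cnj[OF S, of j k] scaleR_conv_of_real Skk d_def[symmetric])
qed

(* Symmetric Gaussian elimination: a positive pivot splits off one rank-one term and clears its
   row, a zero pivot has a zero row; induct on the set of rows that may be nonzero. *)
lemma psd_eq_sum_outer:
  assumes "psd S" shows "\<exists>xs. S = (\<Sum>x\<leftarrow>xs. outer x)"
proof -
  have "\<exists>xs. S = (\<Sum>x\<leftarrow>xs. outer x)"
    if "finite K" "psd S" "\<And>i j. i \<notin> K \<Longrightarrow> S$i$j = 0" for K and S :: "complex^'n^'n"
    using that
  proof (induction K arbitrary: S rule: finite_induct)
    case empty
    then have "S = 0" by (simp add: vec_eq_iff)
    then show ?case by (intro exI[of _ "[]"]) simp
  next
    case (insert k K)
    show ?case
    proof (cases "S$k$k = 0")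
      case True
      have "S$i$j = 0" if "i \<notin> K" for i j
      proof (cases "i = k")
        case True
        then show ?thesis using psd_row_zero[OF insert.prems(1) \<open>S$k$k = 0\<close>] by simp
      next
        case False
        then show ?thesis using insert.prems(2) that by simp
      qed
      then show ?thesis using insert.IH insert.prems by blast
    next
      case False
      define d where "d = Re (S$k$k)"
      have "0 \<le> d"
        using psd_sesq_nonneg[OF insert.prems(1), of "axis k 1"] by (simp add: sesq_axis d_def)
      moreover have "S$k$k = of_real d"
        using psd_sesq_real[OF insert.prems(1), of "axis k 1"] by (simp add: sesq_axis d_def)
      ultimately have d: "0 < d"
        using False by auto
      define S' where "S' = S - (1 / d) *\<^sub>R outer (column k S)"
      note schur = psd_schur_complement[OF insert.prems(1) d[unfolded d_def], folded d_def S'_def]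
      have "S'$i$j = 0" if "i \<notin> K" for i j
      proof (cases "i = k")
        case True
        then show ?thesis using schur(2) by simp
      next
        case False
        then show ?thesis using insert.prems(2) that by (simp add: S'_def outer_def column_def)
      qed
      then obtain xs where xs: "S' = (\<Sum>x\<leftarrow>xs. outer x)"
        using insert.IH schur(1) by blast
      have "S = outer (of_real (1 / sqrt d) *s column k S) + S'"
        unfolding outer_scale_real S'_def using d by (simp add: power_divide)
      then show ?thesis
        using xs by (intro exI[of _ "of_real (1 / sqrt d) *s column k S # xs"]) simp
    qed
  qed
  from this[OF finite_class.finite_UNIV assms] show ?thesis by simp
qed

lemma sum_UNIV_prod:
  "(\<Sum>p\<in>(UNIV::('a::finite \<times> 'b::finite) set). f p) = (\<Sum>a\<in>UNIV. \<Sum>b\<in>UNIV. f (a, b))"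
  unfolding UNIV_Times_UNIV[symmetric] sum.cartesian_product by simp

lemma kron_add_left: "kron (A + B) C = kron A C + kron B C"
  by (simp add: kron_def vec_eq_iff ring_distribs)

lemma kron_add_right: "kron A (B + C) = kron A B + kron A C"
  by (simp add: kron_def vec_eq_iff ring_distribs)

lemma kron_scaleR_left: "kron (r *\<^sub>R A) B = r *\<^sub>R kron A B"
  by (simp add: kron_def vec_eq_iff)

lemma kron_scaleR_right: "kron A (r *\<^sub>R B) = r *\<^sub>R kron A B"
  by (simp add: kron_def vec_eq_iff)

lemma kron_zero_right: "kron A 0 = 0"
  by (simp add: kron_def vec_eq_iff)

lemma kron_mult: "kron A B ** kron C D = kron (A ** C) (B ** D)"
proof -
  have "(kron A B ** kron C D)$p$q = kron (A ** C) (B ** D) $p$q" for p q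
  proof -
    have "(kron A B ** kron C D)$p$q
        = (\<Sum>k\<in>UNIV. \<Sum>l\<in>UNIV. (A$fst p$k * C$k$fst q) * (B$snd p$l * D$l$snd q))"
      unfolding matrix_matrix_mult_def vec_lambda_beta sum_UNIV_prod by (simp add: kron_def mult_ac)
    also have "\<dots> = kron (A ** C) (B ** D) $p$q"
      unfolding sum_product[symmetric] by (simp add: kron_def matrix_matrix_mult_def)
    finally show ?thesis .
  qed
  then show ?thesis by (simp add: vec_eq_iff)
qed

lemma adj_kron: "adj (kron A B) = kron (adj A) (adj B)"
  by (simp add: vec_eq_iff adj_def kron_def)

definition kron_vec :: "complex^'r \<Rightarrow> complex^'a \<Rightarrow> complex^('r \<times> 'a)" where
  "kron_vec u x = (\<chi> p. u$fst p * x$snd p)"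

lemma kron_mult_kron_vec: "kron P Q *v kron_vec v y = kron_vec (P *v v) (Q *v y)"
  by (simp add: vec_eq_iff kron_def kron_vec_def matrix_vector_mult_def sum_UNIV_prod
      sum_product mult_ac)

lemma cinner_kron_vec: "cinner (kron_vec u x) (kron_vec w z) = cinner u w * cinner x z"
  by (simp add: cinner_def kron_vec_def sum_UNIV_prod sum_product mult_ac)

lemma sesq_kron: "sesq (kron P Q) (kron_vec u x) (kron_vec v y) = sesq P u v * sesq Q x y"
  by (simp add: sesq_def kron_mult_kron_vec cinner_kron_vec)

(* The matrix to the left of P is the map v \<mapsto> v \<otimes> x. *)
lemma kron_outer_eq_congruence:
  "kron P (outer x) = (\<chi> p r. if fst p = r then x$snd p else 0) ** P ** adj (\<chi> p r. if fst p = r then x$snd p else 0)"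
  by (simp add: vec_eq_iff kron_def outer_def matrix_matrix_mult_def adj_def if_distrib if_distribR
      sum.delta cong: if_cong)

lemma psd_kron:
  assumes "psd P" and "psd S" shows "psd (kron P S)"
proof -
  obtain xs where S: "S = (\<Sum>x\<leftarrow>xs. outer x)"
    using psd_eq_sum_outer[OF assms(2)] by blast
  have "psd (kron P (\<Sum>x\<leftarrow>xs. outer x))"
  proof (induction xs)
    case Nil
    then show ?case by (simp add: kron_zero_right psd_zero)
  next
    case (Cons x xs)
    have "psd (kron P (outer x))"
      unfolding kron_outer_eq_congruence by (rule psd_congruence[OF assms(1)])
    then show ?case
      using Cons.IH by (simp add: kron_add_right psd_add)
  qed
  then show ?thesis unfolding S .
qed

lemma cinner_Cauchy_Schwarz: "cmod (cinner u w) \<le> norm u * norm w"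
proof (rule power2_le_imp_le)
  have "psd (mat 1 :: complex^'n^'n)"
    unfolding psd_iff_sesq sesq_mat1 cinner_self by simp
  from psd_Cauchy_Schwarz[OF this, of u w]
  show "(cmod (cinner u w))\<^sup>2 \<le> (norm u * norm w)\<^sup>2"
    unfolding sesq_mat1 cinner_self by (simp add: power_mult_distrib)
qed simp

lemma Re_sesq_le_onorm: "Re (sesq M v v) \<le> onorm ((*v) M) * (norm v)\<^sup>2"
proof -
  have "Re (sesq M v v) \<le> norm v * norm (M *v v)"
    unfolding sesq_def using complex_Re_le_cmod cinner_Cauchy_Schwarz order_trans by blast
  also have "\<dots> \<le> norm v * (onorm ((*v) M) * norm v)"
    by (intro mult_left_mono onorm matrix_vector_mul_bounded_linear) simp
  finally show ?thesis by (simp add: power2_eq_square mult_ac)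
qed

lemma psd_onorm_le:
  assumes M: "psd M" and t: "0 \<le> t" and bound: "\<And>v. Re (sesq M v v) \<le> t * (norm v)\<^sup>2"
  shows "onorm ((*v) M) \<le> t"
proof (rule onorm_le)
  fix v
  define w where "w = M *v v"
  have "sesq M w v = of_real ((norm w)\<^sup>2)"
    unfolding sesq_def w_def[symmetric] cinner_self ..
  then have "cmod (sesq M w v) = (norm w)\<^sup>2"
    by (simp only: norm_of_real) simp
  then have "((norm w)\<^sup>2)\<^sup>2 \<le> Re (sesq M w w) * Re (sesq M v v)"
    using psd_Cauchy_Schwarz[OF M, of w v] by simp
  also have "\<dots> \<le> (t * (norm w)\<^sup>2) * (t * (norm v)\<^sup>2)"
    using bound psd_sesq_nonneg[OF M] t by (intro mult_mono) auto
  finally have "(norm w)\<^sup>2 * (norm w)\<^sup>2 \<le> (norm w)\<^sup>2 * (t * norm v)\<^sup>2"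
    by (simp add: power2_eq_square mult_ac)
  from mult_left_le_imp_le[OF this] have "(norm w)\<^sup>2 \<le> (t * norm v)\<^sup>2"
    by (cases "w = 0") simp_all
  from power2_le_imp_le[OF this] show "norm (M *v v) \<le> t * norm v"
    unfolding w_def using t by simp
qed

lemma psd_onorm_scaleR_mat1_minus:
  assumes "psd M" shows "psd (onorm ((*v) M) *\<^sub>R mat 1 - M)"
  unfolding psd_iff_sesq
proof
  fix v
  have "sesq (onorm ((*v) M) *\<^sub>R mat 1 - M) v v = of_real (onorm ((*v) M) * (norm v)\<^sup>2 - Re (sesq M v v))"
    unfolding sesq_diff sesq_scaleR sesq_mat1 cinner_self
    by (subst psd_sesq_real[OF assms]) (simp add: scaleR_conv_of_real)
  then show "sesq (onorm ((*v) M) *\<^sub>R mat 1 - M) v v \<in> \<real> \<and> 0 \<le> Re (sesq (onorm ((*v) M) *\<^sub>R mat 1 - M) v v)"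
    using Re_sesq_le_onorm[of M v] by simp
qed

lemma feasible_trace_bound:
  fixes X \<tau> :: "complex^'a^'a" and \<omega> :: "complex^'r^'r"
  assumes \<omega>: "psd \<omega>" and \<tau>: "mtrace \<tau> = 1"
    and feasible: "psd (kron (mat 1) X - kron \<omega> \<tau>)"
  shows "Re (sesq \<omega> v v) \<le> Re (mtrace X) * (norm v)\<^sup>2"
proof -
  define q where "q = Re (sesq \<omega> v v)"
  have "0 \<le> (norm v)\<^sup>2 * Re (X$a$a) - q * Re (\<tau>$a$a)" for a
  proof -
    have "0 \<le> Re (sesq (kron (mat 1) X - kron \<omega> \<tau>) (kron_vec v (axis a 1)) (kron_vec v (axis a 1)))"
      by (rule psd_sesq_nonneg[OF feasible])
    also have "\<dots> = (norm v)\<^sup>2 * Re (X$a$a) - q * Re (\<tau>$a$a)"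
      unfolding sesq_diff sesq_kron sesq_axis sesq_mat1 cinner_self q_def
      by (subst psd_sesq_real[OF \<omega>]) simp
    finally show ?thesis .
  qed
  then have "0 \<le> (\<Sum>a\<in>UNIV. (norm v)\<^sup>2 * Re (X$a$a) - q * Re (\<tau>$a$a))"
    by (intro sum_nonneg)
  also have "\<dots> = (norm v)\<^sup>2 * Re (mtrace X) - q * Re (mtrace \<tau>)"
    by (simp add: mtrace_def Re_sum sum_subtractf sum_distrib_left)
  finally show ?thesis
    using \<tau> unfolding q_def by (simp add: mult.commute)
qed

lemma feasible_onorm_scaleR:
  fixes \<omega> :: "complex^'r^'r" and \<tau> :: "complex^'a^'a"
  assumes "psd \<omega>" and "psd \<tau>"
  shows "psd (kron (mat 1) (onorm ((*v) \<omega>) *\<^sub>R \<tau>) - kron \<omega> \<tau>)"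
proof -
  have "kron (mat 1) (onorm ((*v) \<omega>) *\<^sub>R \<tau>) - kron \<omega> \<tau> = kron (onorm ((*v) \<omega>) *\<^sub>R mat 1 - \<omega>) \<tau>"
    by (simp add: vec_eq_iff kron_def mat_def) (simp add: scaleR_conv_of_real algebra_simps)
  then show ?thesis
    using assms by (simp add: psd_kron psd_onorm_scaleR_mat1_minus)
qed

lemma Hmin_kron:
  fixes \<omega> :: "complex^'r^'r" and \<tau> :: "complex^'a^'a"
  assumes \<omega>: "psd \<omega>" and \<tau>: "density \<tau>"
  shows "Hmin (kron \<omega> \<tau>) = - log 2 (onorm (\<lambda>v. \<omega> *v v))"
proof -
  define s where "s = onorm ((*v) \<omega>)"
  define feasible where "feasible = {Re (mtrace X) | X :: complex^'a^'a.
    psd X \<and> psd (kron (mat 1 :: complex^'r^'r) X - kron \<omega> \<tau>)}"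
  have \<tau>_psd: "psd \<tau>" and \<tau>_trace: "mtrace \<tau> = 1"
    using \<tau> by (simp_all add: density_def)
  have "0 \<le> s"
    unfolding s_def by (rule onorm_pos_le[OF matrix_vector_mul_bounded_linear])
  then have "psd (s *\<^sub>R \<tau>)"
    using \<tau>_psd by (rule psd_scaleR)
  moreover have "Re (mtrace (s *\<^sub>R \<tau>)) = s"
    using \<tau>_trace by (simp add: mtrace_def flip: scaleR_sum_right)
  ultimately have "s \<in> feasible"
    using feasible_onorm_scaleR[OF \<omega> \<tau>_psd] unfolding feasible_def s_def by force
  moreover have "s \<le> t" if "t \<in> feasible" for t
  proof -
    from \<open>t \<in> feasible\<close> obtain X
      where X: "psd X" "psd (kron (mat 1 :: complex^'r^'r) X - kron \<omega> \<tau>)" and t: "t = Re (mtrace X)"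
      unfolding feasible_def by blast
    have "0 \<le> t"
      unfolding t mtrace_def Re_sum by (intro sum_nonneg) (metis psd_sesq_nonneg[OF X(1)] sesq_axis)
    then show "s \<le> t"
      unfolding s_def t using feasible_trace_bound[OF \<omega> \<tau>_trace X(2)] by (intro psd_onorm_le \<omega>)
  qed
  ultimately have "Inf feasible = s"
    by (rule cInf_eq_minimum)
  then show ?thesis
    unfolding Hmin_def feasible_def s_def by simp
qed

lemma haar_prob_sets: "haar_prob \<mu> \<Longrightarrow> sets \<mu> = sets borel"
  unfolding haar_prob_def by blast

lemma haar_prob_space: "haar_prob \<mu> \<Longrightarrow> space \<mu> = UNIV"
  using sets_eq_imp_space_eq[OF haar_prob_sets] by (metis space_borel)

lemma haar_prob_finite_measure: "haar_prob \<mu> \<Longrightarrow> finite_measure \<mu>"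
  unfolding haar_prob_def by (intro finite_measureI) simp

lemma haar_prob_measure_space: "haar_prob \<mu> \<Longrightarrow> measure \<mu> (space \<mu>) = 1"
  unfolding haar_prob_def by (simp add: measure_def)

lemma haar_prob_measurable_continuous:
  assumes "haar_prob \<mu>" and "continuous_on UNIV F"
  shows "F \<in> borel_measurable \<mu>"
  using borel_measurable_continuous_onI[OF assms(2)]
  by (simp add: measurable_cong_sets[OF haar_prob_sets[OF assms(1)] refl])

lemma haar_prob_integrable_continuous:
  fixes F :: "'g::topological_group_add \<Rightarrow> 'b::{banach, second_countable_topology}"
  assumes H: "haar_prob \<mu>" and F: "continuous_on UNIV F"
  shows "integrable \<mu> F"
proof -
  have "compact (range F)"
    using H F unfolding haar_prob_def by (blast intro: compact_continuous_image)
  then have "bounded (range F)"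
    by (rule compact_imp_bounded)
  then obtain B where "\<And>g. norm (F g) \<le> B"
    unfolding bounded_iff by blast
  then show ?thesis
    using haar_prob_measurable_continuous[OF H F]
    by (intro finite_measure.integrable_const_bound[OF haar_prob_finite_measure[OF H], where B=B]) auto
qed

lemma haar_prob_measurable_translate:
  assumes "haar_prob \<mu>" shows "(+) h \<in> measurable \<mu> \<mu>"
  using haar_prob_measurable_continuous[OF assms, of "(+) h"]
  by (simp add: measurable_cong_sets[OF refl haar_prob_sets[OF assms]] continuous_intros)

lemma haar_prob_distr_translate:
  assumes H: "haar_prob \<mu>"
  shows "distr \<mu> \<mu> ((+) h) = \<mu>"
proof (rule measure_eqI)
  fix A assume "A \<in> sets (distr \<mu> \<mu> ((+) h))"
  then have A: "A \<in> sets borel"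
    using haar_prob_sets[OF H] by simp
  have "(+) h -` A \<inter> space \<mu> = (+) (- h) ` A"
    unfolding haar_prob_space[OF H] by (force simp: add.assoc[symmetric])
  then show "emeasure (distr \<mu> \<mu> ((+) h)) A = emeasure \<mu> A"
    using H A haar_prob_sets[OF H] haar_prob_measurable_translate[OF H]
    unfolding haar_prob_def by (simp add: emeasure_distr)
qed simp

lemma haar_prob_integral_translate:
  fixes F :: "'g::topological_group_add \<Rightarrow> 'b::{banach, second_countable_topology}"
  assumes H: "haar_prob \<mu>" and F: "F \<in> borel_measurable \<mu>"
  shows "(\<integral>g. F (h + g) \<partial>\<mu>) = integral\<^sup>L \<mu> F"
  using integral_distr[OF haar_prob_measurable_translate[OF H] F]
  unfolding haar_prob_distr_translate[OF H] by simp

lemma adj_mult: "adj (A ** B) = adj B ** adj A"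
  by (simp add: vec_eq_iff adj_def matrix_matrix_mult_def mult.commute)

lemma matrix_add_rdistrib: "(A + B) ** C = A ** C + B ** C"
  by (simp add: vec_eq_iff matrix_matrix_mult_def sum.distrib ring_distribs)

lemma bounded_linear_conjugation: "bounded_linear (\<lambda>X. A ** X ** (B :: complex^'n^'n))"
  unfolding linear_conv_bounded_linear[symmetric]
  by (rule linearI) (simp_all add: matrix_add_ldistrib matrix_add_rdistrib matrix_scalar_ac
      scalar_matrix_assoc)

lemma continuous_on_conjugation:
  fixes U :: "'g::topological_space \<Rightarrow> complex^'n^'n"
  assumes "continuous_on UNIV U"
  shows "continuous_on UNIV (\<lambda>g. U g ** M ** adj (U g))"
proof -
  have entries: "continuous_on UNIV (\<lambda>g. U g $ i $ j)" for i j
    by (intro continuous_on_component assms)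
  show ?thesis
    unfolding matrix_matrix_mult_def adj_def vec_lambda_beta by (intro continuous_intros entries)
qed

lemma twirl_integrable:
  assumes "haar_prob \<mu>" and "unitary_rep U"
  shows "integrable \<mu> (\<lambda>g. U g ** M ** adj (U g))"
  using assms by (intro haar_prob_integrable_continuous continuous_on_conjugation)
    (simp_all add: unitary_rep_def)

lemma twirl_bounded_linear:
  assumes "haar_prob \<mu>" and "unitary_rep U" and "bounded_linear T"
  shows "T (twirl \<mu> U M) = (\<integral>g. T (U g ** M ** adj (U g)) \<partial>\<mu>)"
  unfolding twirl_def using integral_bounded_linear[OF assms(3) twirl_integrable[OF assms(1,2)]] ..

lemma twirl_invariant:
  assumes H: "haar_prob \<mu>" and U: "unitary_rep U"
  shows "U h ** twirl \<mu> U M ** adj (U h) = twirl \<mu> U M"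
proof -
  have "U h ** twirl \<mu> U M ** adj (U h) = (\<integral>g. U h ** (U g ** M ** adj (U g)) ** adj (U h) \<partial>\<mu>)"
    by (rule twirl_bounded_linear[OF H U bounded_linear_conjugation])
  also have "\<dots> = (\<integral>g. U (h + g) ** M ** adj (U (h + g)) \<partial>\<mu>)"
    using U by (simp add: unitary_rep_def adj_mult matrix_mul_assoc)
  also have "\<dots> = twirl \<mu> U M"
    unfolding twirl_def using U
    by (intro haar_prob_integral_translate[OF H] haar_prob_measurable_continuous[OF H]
        continuous_on_conjugation) (simp add: unitary_rep_def)
  finally show ?thesis .
qed

lemma twirl_fixed:
  assumes "haar_prob \<mu>" and "\<And>g. U g ** A ** adj (U g) = A"
  shows "twirl \<mu> U A = A"
  using haar_prob_measure_space[OF assms(1)] by (simp add: twirl_def assms(2))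

lemma twirl_twirl:
  assumes "haar_prob \<mu>" and "unitary_rep U"
  shows "twirl \<mu> U (twirl \<mu> U M) = twirl \<mu> U M"
  using assms by (intro twirl_fixed twirl_invariant)

lemma mtrace_twirl:
  assumes H: "haar_prob \<mu>" and U: "unitary_rep U"
  shows "mtrace (twirl \<mu> U M) = mtrace M"
proof -
  have "bounded_linear (mtrace :: complex^'n^'n \<Rightarrow> complex)"
    unfolding linear_conv_bounded_linear[symmetric]
    by (rule linearI) (simp_all add: mtrace_def sum.distrib scaleR_sum_right)
  then have "mtrace (twirl \<mu> U M) = (\<integral>g. mtrace (U g ** M ** adj (U g)) \<partial>\<mu>)"
    by (rule twirl_bounded_linear[OF H U])
  also have "\<dots> = (\<integral>g. mtrace M \<partial>\<mu>)"
    using trace_mul_sym[of "U g ** M" "adj (U g)" for g] U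
    by (simp add: mtrace_def trace_def matrix_mul_assoc unitary_rep_def unitary_def)
  finally show ?thesis
    using haar_prob_measure_space[OF H] by simp
qed

lemma psd_twirl:
  fixes M :: "complex^'n^'n"
  assumes H: "haar_prob \<mu>" and U: "unitary_rep U" and M: "psd M"
  shows "psd (twirl \<mu> U M)"
  unfolding psd_iff_sesq
proof
  fix v :: "complex^'n"
  have "bounded_linear (\<lambda>X. sesq X v v)"
    unfolding linear_conv_bounded_linear[symmetric]
    by (rule linearI) (simp_all add: sesq_add sesq_scaleR)
  then have "sesq (twirl \<mu> U M) v v = (\<integral>g. sesq (U g ** M ** adj (U g)) v v \<partial>\<mu>)"
    by (rule twirl_bounded_linear[OF H U])
  also have "\<dots> = (\<integral>g. of_real (Re (sesq (U g ** M ** adj (U g)) v v)) \<partial>\<mu>)"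
    by (rule Bochner_Integration.integral_cong[OF refl psd_sesq_real[OF psd_congruence[OF M]]])
  also have "\<dots> = of_real (\<integral>g. Re (sesq (U g ** M ** adj (U g)) v v) \<partial>\<mu>)"
    by (rule integral_complex_of_real)
  finally have "sesq (twirl \<mu> U M) v v = of_real (\<integral>g. Re (sesq (U g ** M ** adj (U g)) v v) \<partial>\<mu>)" .
  moreover have "0 \<le> (\<integral>g. Re (sesq (U g ** M ** adj (U g)) v v) \<partial>\<mu>)"
    by (intro integral_nonneg_AE AE_I2 psd_sesq_nonneg psd_congruence M)
  ultimately show "sesq (twirl \<mu> U M) v v \<in> \<real> \<and> 0 \<le> Re (sesq (twirl \<mu> U M) v v)"
    by simp
qed

lemma density_twirl:
  assumes "haar_prob \<mu>" and "unitary_rep U" and "density M"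
  shows "density (twirl \<mu> U M)"
  using assms psd_twirl mtrace_twirl unfolding density_def by metis

lemma conjugation_rep_RA_kron:
  "rep_RA UR UA g ** kron A B ** adj (rep_RA UR UA g)
    = kron (UR g ** A ** adj (UR g)) (UA g ** B ** adj (UA g))"
  unfolding rep_RA_def adj_kron kron_mult ..

lemma twirl_rep_RA_kron_fixed_left:
  assumes H: "haar_prob \<mu>" and A: "unitary_rep UA" and fixed: "\<And>g. UR g ** P ** adj (UR g) = P"
  shows "twirl \<mu> (rep_RA UR UA) (kron P Q) = kron P (twirl \<mu> UA Q)"
proof -
  have "bounded_linear (kron P)"
    unfolding linear_conv_bounded_linear[symmetric]
    by (rule linearI) (simp_all add: kron_add_right kron_scaleR_right)
  then show ?thesis
    unfolding twirl_def conjugation_rep_RA_kron fixed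
    by (rule integral_bounded_linear[OF _ twirl_integrable[OF H A]])
qed

lemma twirl_rep_RA_kron_fixed_right:
  assumes H: "haar_prob \<mu>" and R: "unitary_rep UR" and fixed: "\<And>g. UA g ** Q ** adj (UA g) = Q"
  shows "twirl \<mu> (rep_RA UR UA) (kron P Q) = kron (twirl \<mu> UR P) Q"
proof -
  have "bounded_linear (\<lambda>X. kron X Q)"
    unfolding linear_conv_bounded_linear[symmetric]
    by (rule linearI) (simp_all add: kron_add_left kron_scaleR_left)
  then show ?thesis
    unfolding twirl_def conjugation_rep_RA_kron fixed
    by (rule integral_bounded_linear[OF _ twirl_integrable[OF H R]])
qed

theorem lemma4:
  fixes \<mu> :: "'g::topological_group_add measure"
    and UR :: "'g \<Rightarrow> complex^'r^'r" and UA :: "'g \<Rightarrow> complex^'a^'a"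
    and \<rho> :: "complex^'a^'a" and \<eta> :: "complex^'r^'r"
  assumes "haar_prob \<mu>" and "unitary_rep UR" and "unitary_rep UA"
    and "density \<rho>" and "density \<eta>"
  shows "H_eta \<mu> UR UA (twirl \<mu> UR \<eta>) \<rho> = H_eta \<mu> UR UA \<eta> (twirl \<mu> UA \<rho>)
    \<and> H_eta \<mu> UR UA \<eta> (twirl \<mu> UA \<rho>) = H_eta \<mu> UR UA (twirl \<mu> UR \<eta>) (twirl \<mu> UA \<rho>)
    \<and> H_eta \<mu> UR UA (twirl \<mu> UR \<eta>) (twirl \<mu> UA \<rho>) = - log 2 (onorm (\<lambda>v. twirl \<mu> UR \<eta> *v v))"
proof -
  note H = assms(1) and R = assms(2) and A = assms(3)
  have "twirl \<mu> (rep_RA UR UA) (kron (twirl \<mu> UR \<eta>) \<rho>) = kron (twirl \<mu> UR \<eta>) (twirl \<mu> UA \<rho>)"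
    using twirl_rep_RA_kron_fixed_left[OF H A twirl_invariant[OF H R]] .
  moreover have "twirl \<mu> (rep_RA UR UA) (kron \<eta> (twirl \<mu> UA \<rho>)) = kron (twirl \<mu> UR \<eta>) (twirl \<mu> UA \<rho>)"
    using twirl_rep_RA_kron_fixed_right[OF H R twirl_invariant[OF H A]] .
  moreover have "twirl \<mu> (rep_RA UR UA) (kron (twirl \<mu> UR \<eta>) (twirl \<mu> UA \<rho>))
      = kron (twirl \<mu> UR \<eta>) (twirl \<mu> UA \<rho>)"
    using twirl_rep_RA_kron_fixed_left[OF H A twirl_invariant[OF H R]] twirl_twirl[OF H A] by simp
  moreover have "Hmin (kron (twirl \<mu> UR \<eta>) (twirl \<mu> UA \<rho>)) = - log 2 (onorm (\<lambda>v. twirl \<mu> UR \<eta> *v v))"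
    using density_twirl[OF H R assms(5)] density_twirl[OF H A assms(4)]
    by (intro Hmin_kron) (simp_all add: density_def)
  ultimately show ?thesis
    unfolding H_eta_def by simp
qed

end
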